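(* Let $F_1,F_2$ be lean DQCNFs over the same universal variables, the same existential variables and the same dependency sets. Then the DQCNF $F_1\cup F_2$ (same variables and dependency sets, matrix the union of the two clause sets) is lean. Consequently every DQCNF $F$ has a largest (with respect to inclusion of clause sets) lean sub-DQCNF, called its lean kernel.
   Context: A DQCNF $F$ consists of a set $X$ of universal variables, a set $Y$ of existential variables, a dependency set $D_y\subseteq X$ for each $y\in Y$, and a matrix, a finite set of clauses over $X\cup Y$. An autarky for $F$ is a partial map $\varphi$ from a subset $\mathrm{dom}(\varphi)\subseteq Y$ to Boolean functions, where $\varphi(y)$ depends only on variables in $D_y$, such that every clause $C$ of $F$ either contains no variable of $\mathrm{dom}(\varphi)$ (then $\varphi$ does not touch $C$), or becomes a tautology (identically true as a function of all remaining variables) after substituting $\varphi(y)$ for each $y\in\mathrm{dom}(\varphi)$ occurring in $C$. An autarky is trivial if it touches no clause. $F$ is lean if it has no non-trivial autarky. A sub-DQCNF of $F$ is a DQCNF with the same variables and dependency sets whose matrix is a subset of the matrix of $F$. *)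

theory Defs
  imports Main
begin

text \<open>Literals are pairs (variable, polarity): (v, True) is the positive literal v,
  (v, False) the negative literal.\<close>

type_synonym 'v lit = "'v \<times> bool"
type_synonym 'v clause = "'v lit set"

record 'v dqcnf =
  univ :: "'v set"
  exist :: "'v set"
  dep :: "'v \<Rightarrow> 'v set"
  matrix :: "'v clause set"

definition vars_clause :: "'v clause \<Rightarrow> 'v set" where
  "vars_clause C = fst ` C"

definition wf_dqcnf :: "'v dqcnf \<Rightarrow> bool" where
  "wf_dqcnf F \<longleftrightarrow>
     finite (univ F) \<and> finite (exist F) \<and> univ F \<inter> exist F = {} \<and>
     (\<forall>y\<in>exist F. dep F y \<subseteq> univ F) \<and>
     finite (matrix F) \<and>
     (\<forall>C\<in>matrix F. finite C \<and> vars_clause C \<subseteq> univ F \<union> exist F)"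

definition depends_only :: "(('v \<Rightarrow> bool) \<Rightarrow> bool) \<Rightarrow> 'v set \<Rightarrow> bool" where
  "depends_only f S \<longleftrightarrow> (\<forall>\<alpha> \<beta>. (\<forall>x\<in>S. \<alpha> x = \<beta> x) \<longrightarrow> f \<alpha> = f \<beta>)"

definition subst_val :: "('v \<rightharpoonup> (('v \<Rightarrow> bool) \<Rightarrow> bool)) \<Rightarrow> ('v \<Rightarrow> bool) \<Rightarrow> 'v \<Rightarrow> bool" where
  "subst_val \<phi> \<alpha> v = (case \<phi> v of Some f \<Rightarrow> f \<alpha> | None \<Rightarrow> \<alpha> v)"

definition touches :: "('v \<rightharpoonup> (('v \<Rightarrow> bool) \<Rightarrow> bool)) \<Rightarrow> 'v clause \<Rightarrow> bool" where
  "touches \<phi> C \<longleftrightarrow> vars_clause C \<inter> dom \<phi> \<noteq> {}"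

definition is_autarky :: "'v dqcnf \<Rightarrow> ('v \<rightharpoonup> (('v \<Rightarrow> bool) \<Rightarrow> bool)) \<Rightarrow> bool" where
  "is_autarky F \<phi> \<longleftrightarrow>
     dom \<phi> \<subseteq> exist F \<and>
     (\<forall>y f. \<phi> y = Some f \<longrightarrow> depends_only f (dep F y)) \<and>
     (\<forall>C\<in>matrix F. touches \<phi> C \<longrightarrow> (\<forall>\<alpha>. \<exists>(v, b)\<in>C. subst_val \<phi> \<alpha> v = b))"

definition trivial_autarky :: "'v dqcnf \<Rightarrow> ('v \<rightharpoonup> (('v \<Rightarrow> bool) \<Rightarrow> bool)) \<Rightarrow> bool" where
  "trivial_autarky F \<phi> \<longleftrightarrow> (\<forall>C\<in>matrix F. \<not> touches \<phi> C)"

definition lean :: "'v dqcnf \<Rightarrow> bool" where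
  "lean F \<longleftrightarrow> (\<forall>\<phi>. is_autarky F \<phi> \<longrightarrow> trivial_autarky F \<phi>)"

definition same_prefix :: "'v dqcnf \<Rightarrow> 'v dqcnf \<Rightarrow> bool" where
  "same_prefix F G \<longleftrightarrow> univ F = univ G \<and> exist F = exist G \<and>
     (\<forall>y\<in>exist F. dep F y = dep G y)"

definition sub_dqcnf :: "'v dqcnf \<Rightarrow> 'v dqcnf \<Rightarrow> bool" where
  "sub_dqcnf G F \<longleftrightarrow> same_prefix G F \<and> matrix G \<subseteq> matrix F"

definition union_dqcnf :: "'v dqcnf \<Rightarrow> 'v dqcnf \<Rightarrow> 'v dqcnf" where
  "union_dqcnf F1 F2 = F1\<lparr>matrix := matrix F1 \<union> matrix F2\<rparr>"

end

theory Submission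
  imports Defs
begin

text \<open>An autarky of a DQCNF is an autarky of each of its sub-DQCNFs, because the
  conditions on an autarky are checked prefix-wise and clause by clause. Hence an autarky
  of a union of lean DQCNFs restricts to an autarky of each member, which touches none of
  its clauses; so it touches no clause of the union. Applied to the family of all lean
  sub-DQCNFs, this makes their union the largest lean sub-DQCNF.\<close>

lemma same_prefix_sym: "same_prefix F G \<Longrightarrow> same_prefix G F"
  unfolding same_prefix_def by auto

lemma is_autarky_sub_dqcnf:
  assumes "is_autarky F \<phi>" and "sub_dqcnf H F"
  shows "is_autarky H \<phi>"
proof -
  have prefix: "exist H = exist F" "\<And>y. y \<in> exist H \<Longrightarrow> dep H y = dep F y"
    and sub: "matrix H \<subseteq> matrix F"
    using assms(2) unfolding sub_dqcnf_def same_prefix_def by auto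
  have dom: "dom \<phi> \<subseteq> exist H"
    using assms(1) prefix unfolding is_autarky_def by auto
  have "depends_only f (dep H y)" if "\<phi> y = Some f" for y f
  proof -
    have "y \<in> exist H" using dom that by auto
    then show ?thesis using assms(1) that prefix(2) unfolding is_autarky_def by auto
  qed
  with assms(1) dom sub show ?thesis unfolding is_autarky_def by blast
qed

lemma lean_Union:
  assumes "\<And>H. H \<in> S \<Longrightarrow> same_prefix H F" and "\<And>H. H \<in> S \<Longrightarrow> lean H"
  shows "lean (F\<lparr>matrix := \<Union> (matrix ` S)\<rparr>)" (is "lean ?U")
  unfolding lean_def trivial_autarky_def
proof (intro allI impI ballI)
  fix \<phi> C assume aut: "is_autarky ?U \<phi>" and "C \<in> matrix ?U"
  then obtain H where H: "H \<in> S" "C \<in> matrix H" by auto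
  have "sub_dqcnf H ?U"
    using assms(1)[OF H(1)] H(1) unfolding sub_dqcnf_def same_prefix_def by auto
  with aut have "is_autarky H \<phi>" by (rule is_autarky_sub_dqcnf)
  with assms(2)[OF H(1)] H(2) show "\<not> touches \<phi> C"
    unfolding lean_def trivial_autarky_def by blast
qed

lemma lean_union_dqcnf:
  assumes "same_prefix F1 F2" and "lean F1" and "lean F2"
  shows "lean (union_dqcnf F1 F2)"
proof -
  have "lean (F1\<lparr>matrix := \<Union> (matrix ` {F1, F2})\<rparr>)"
    using assms by (intro lean_Union) (auto simp: same_prefix_sym same_prefix_def)
  then show ?thesis unfolding union_dqcnf_def by simp
qed

definition lean_kernel :: "'v dqcnf \<Rightarrow> 'v dqcnf" where
  "lean_kernel F = F\<lparr>matrix := \<Union> (matrix ` {H. sub_dqcnf H F \<and> lean H})\<rparr>"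

lemma sub_dqcnf_lean_kernel: "sub_dqcnf (lean_kernel F) F"
  unfolding sub_dqcnf_def same_prefix_def lean_kernel_def by auto

lemma lean_lean_kernel: "lean (lean_kernel F)"
  unfolding lean_kernel_def by (rule lean_Union) (auto simp: sub_dqcnf_def)

lemma lean_sub_dqcnf_le_lean_kernel:
  "sub_dqcnf H F \<Longrightarrow> lean H \<Longrightarrow> matrix H \<subseteq> matrix (lean_kernel F)"
  unfolding lean_kernel_def by auto

theorem mainTheorem3:
  shows "(\<forall>F1 F2 :: 'v dqcnf. wf_dqcnf F1 \<and> wf_dqcnf F2 \<and> same_prefix F1 F2 \<and>
            lean F1 \<and> lean F2 \<longrightarrow> lean (union_dqcnf F1 F2)) \<and>
         (\<forall>F :: 'v dqcnf. wf_dqcnf F \<longrightarrow>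
            (\<exists>G. sub_dqcnf G F \<and> lean G \<and>
                 (\<forall>H. sub_dqcnf H F \<and> lean H \<longrightarrow> matrix H \<subseteq> matrix G)))"
  using lean_union_dqcnf sub_dqcnf_lean_kernel lean_lean_kernel lean_sub_dqcnf_le_lean_kernel
  by blast

end
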